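(* Let $E$ and $F$ be Banach lattices and consider the Banach lattice direct sum $E \oplus F$ (ordered coordinatewise), with canonical projections $\pi_E: E \oplus F \to E$ and $\pi_F: E \oplus F \to F$. (1) For nonempty sets $A \subset E$ and $B \subset F$, both $A$ is almost Grothendieck in $E$ and $B$ is almost Grothendieck in $F$ if and only if $A \times B$ is almost Grothendieck in $E \oplus F$. (2) If $C \subset E \oplus F$ is almost Grothendieck, then $\pi_E(C)$ and $\pi_F(C)$ are almost Grothendieck in $E$ and $F$, respectively.
   Context: For a Banach lattice $G$, every bounded linear operator $T: G \to c_0$ has the form $T(x) = (x_n'(x))_n$ for a unique weak* null sequence $(x_n') \subset G'$; $T$ is a disjoint operator if $(x_n')$ is disjoint in the dual Banach lattice $G'$. A subset $A \subset G$ is almost Grothendieck if $T(A)$ is relatively weakly compact in $c_0$ for every disjoint operator $T: G \to c_0$. *)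

theory Defs
  imports "HOL-Analysis.Analysis"
begin

definition is_lub_of :: "('a \<Rightarrow> 'a \<Rightarrow> bool) \<Rightarrow> 'a \<Rightarrow> 'a \<Rightarrow> 'a \<Rightarrow> bool" where
  "is_lub_of le x y s \<longleftrightarrow> le x s \<and> le y s \<and> (\<forall>u. le x u \<and> le y u \<longrightarrow> le s u)"

definition banach_lattice :: "('a::banach \<Rightarrow> 'a \<Rightarrow> bool) \<Rightarrow> bool" where
  "banach_lattice le \<longleftrightarrow>
     (\<forall>x. le x x) \<and>
     (\<forall>x y z. le x y \<longrightarrow> le y z \<longrightarrow> le x z) \<and>
     (\<forall>x y. le x y \<longrightarrow> le y x \<longrightarrow> x = y) \<and>
     (\<forall>x y z. le x y \<longrightarrow> le (x + z) (y + z)) \<and>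
     (\<forall>x c. le 0 x \<longrightarrow> 0 \<le> c \<longrightarrow> le 0 (c *\<^sub>R x)) \<and>
     (\<forall>x y. \<exists>s. is_lub_of le x y s) \<and>
     (\<forall>x y a b. is_lub_of le x (- x) a \<longrightarrow> is_lub_of le y (- y) b \<longrightarrow> le a b
                 \<longrightarrow> norm x \<le> norm y)"

text \<open>Coordinatewise order on the direct sum E (+) F (carrier type 'a \<times> 'b with the
  product Banach space structure of HOL-Analysis).\<close>
definition sum_le :: "('a \<Rightarrow> 'a \<Rightarrow> bool) \<Rightarrow> ('b \<Rightarrow> 'b \<Rightarrow> bool) \<Rightarrow> 'a \<times> 'b \<Rightarrow> 'a \<times> 'b \<Rightarrow> bool" where
  "sum_le leE leF p q \<longleftrightarrow> leE (fst p) (fst q) \<and> leF (snd p) (snd q)"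

definition dual_le :: "('a::real_normed_vector \<Rightarrow> 'a \<Rightarrow> bool) \<Rightarrow> ('a \<Rightarrow> real) \<Rightarrow> ('a \<Rightarrow> real) \<Rightarrow> bool" where
  "dual_le le f g \<longleftrightarrow> (\<forall>x. le 0 x \<longrightarrow> f x \<le> g x)"

definition is_dual_abs :: "('a::real_normed_vector \<Rightarrow> 'a \<Rightarrow> bool) \<Rightarrow> ('a \<Rightarrow> real) \<Rightarrow> ('a \<Rightarrow> real) \<Rightarrow> bool" where
  "is_dual_abs le f a \<longleftrightarrow> bounded_linear a \<and> dual_le le f a \<and> dual_le le (\<lambda>x. - f x) a \<and>
     (\<forall>h. bounded_linear h \<and> dual_le le f h \<and> dual_le le (\<lambda>x. - f x) h \<longrightarrow> dual_le le a h)"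

text \<open>f and g are disjoint in G': |f| \<and> |g| = 0, i.e. 0 is the greatest lower bound of |f|, |g|
  (note 0 is always a lower bound of both).\<close>
definition dual_disjoint :: "('a::real_normed_vector \<Rightarrow> 'a \<Rightarrow> bool) \<Rightarrow> ('a \<Rightarrow> real) \<Rightarrow> ('a \<Rightarrow> real) \<Rightarrow> bool" where
  "dual_disjoint le f g \<longleftrightarrow> (\<exists>a b. is_dual_abs le f a \<and> is_dual_abs le g b \<and>
     (\<forall>h. bounded_linear h \<and> dual_le le h a \<and> dual_le le h b \<longrightarrow> dual_le le h (\<lambda>x. 0)))"

definition c0 :: "(nat \<Rightarrow> real) set" where
  "c0 = {x. x \<longlonglongrightarrow> 0}"

definition c0_norm :: "(nat \<Rightarrow> real) \<Rightarrow> real" where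
  "c0_norm x = (SUP n. \<bar>x n\<bar>)"

definition c0_dual :: "((nat \<Rightarrow> real) \<Rightarrow> real) set" where
  "c0_dual = {\<phi>. (\<forall>x\<in>c0. \<forall>y\<in>c0. \<phi> (\<lambda>n. x n + y n) = \<phi> x + \<phi> y) \<and>
                  (\<forall>x\<in>c0. \<forall>c. \<phi> (\<lambda>n. c * x n) = c * \<phi> x) \<and>
                  (\<exists>K. \<forall>x\<in>c0. \<bar>\<phi> x\<bar> \<le> K * c0_norm x)}"

definition c0_weak :: "(nat \<Rightarrow> real) topology" where
  "c0_weak = topology_generated_by {{x\<in>c0. \<phi> x \<in> U} | \<phi> U. \<phi> \<in> c0_dual \<and> open U}"

text \<open>Relatively weakly compact subset of c_0 (weak topology is Hausdorff, so this is
  equivalent to having weakly compact weak closure).\<close>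
definition rel_weakly_compact_c0 :: "(nat \<Rightarrow> real) set \<Rightarrow> bool" where
  "rel_weakly_compact_c0 S \<longleftrightarrow> (\<exists>K. S \<subseteq> K \<and> compactin c0_weak K)"

text \<open>Disjoint operators G \<rightarrow> c_0 are exactly x \<mapsto> (f n x)_n with (f n) a weak* null sequence
  in G' that is (pairwise) disjoint in G'.\<close>
definition almost_grothendieck :: "('a::banach \<Rightarrow> 'a \<Rightarrow> bool) \<Rightarrow> 'a set \<Rightarrow> bool" where
  "almost_grothendieck le A \<longleftrightarrow>
     (\<forall>f :: nat \<Rightarrow> 'a \<Rightarrow> real.
        (\<forall>n. bounded_linear (f n)) \<and> (\<forall>x. (\<lambda>n. f n x) \<longlonglongrightarrow> 0) \<and>
        (\<forall>m n. m \<noteq> n \<longrightarrow> dual_disjoint le (f m) (f n))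
        \<longrightarrow> rel_weakly_compact_c0 ((\<lambda>x n. f n x) ` A))"

end

theory Submission
  imports Defs
begin

(*
  A Banach lattice E sits inside E (+) F as a projection band: the coordinate projection, the
  embedding and the complementary projection are all positive. Composing functionals with the
  projection or with the embedding therefore preserves moduli in the dual, hence disjointness, so
  disjoint weak* null sequences on E lift to E (+) F and those on E (+) F restrict to E (likewise
  for F). Lifting gives the statement about the projections of C. For A \<times> B, a disjoint operator T
  on E (+) F satisfies T(a, b) = T(a, 0) + T(0, b), so T(A \<times> B) lies in the sum of two relatively
  weakly compact subsets of c_0, which is relatively weakly compact since addition is weakly
  continuous.
*)

definition disjoint_operator_seq :: "('a::real_normed_vector \<Rightarrow> 'a \<Rightarrow> bool) \<Rightarrow> (nat \<Rightarrow> 'a \<Rightarrow> real) \<Rightarrow> bool" where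
  "disjoint_operator_seq le f \<longleftrightarrow>
     (\<forall>n. bounded_linear (f n)) \<and> (\<forall>x. (\<lambda>n. f n x) \<longlonglongrightarrow> 0) \<and>
     (\<forall>m n. m \<noteq> n \<longrightarrow> dual_disjoint le (f m) (f n))"

lemma almost_grothendieck_iff:
  "almost_grothendieck le A \<longleftrightarrow>
     (\<forall>f. disjoint_operator_seq le f \<longrightarrow> rel_weakly_compact_c0 ((\<lambda>x n. f n x) ` A))"
  unfolding almost_grothendieck_def disjoint_operator_seq_def by blast

lemma is_dual_abs_bounded_linear: "is_dual_abs le f a \<Longrightarrow> bounded_linear a"
  unfolding is_dual_abs_def by blast

lemma is_dual_abs_nonneg: "is_dual_abs le f a \<Longrightarrow> le 0 x \<Longrightarrow> 0 \<le> a x"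
  unfolding is_dual_abs_def dual_le_def by (smt (verit))

lemma dual_le_both_nonneg:
  "dual_le le f h \<Longrightarrow> dual_le le (\<lambda>x. - f x) h \<Longrightarrow> le 0 x \<Longrightarrow> 0 \<le> h x"
  unfolding dual_le_def by (smt (verit))

text \<open>\<open>J \<circ> P\<close> is a band projection of \<open>G\<close> onto a copy of \<open>E\<close>.\<close>

locale band_summand =
  fixes le :: "'g::banach \<Rightarrow> 'g \<Rightarrow> bool" and leE :: "'e::banach \<Rightarrow> 'e \<Rightarrow> bool"
    and P :: "'g \<Rightarrow> 'e" and J :: "'e \<Rightarrow> 'g"
  assumes bounded_linear_P: "bounded_linear P" and bounded_linear_J: "bounded_linear J"
    and P_J [simp]: "\<And>y. P (J y) = y"
    and P_nonneg: "\<And>x. le 0 x \<Longrightarrow> leE 0 (P x)"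
    and J_nonneg: "\<And>y. leE 0 y \<Longrightarrow> le 0 (J y)"
    and complement_nonneg: "\<And>x. le 0 x \<Longrightarrow> le 0 (x - J (P x))"
begin

lemma P_complement: "P (x - J (P x)) = 0"
  using linear_diff[OF bounded_linear.linear[OF bounded_linear_P]] by simp

lemma linear_split: "linear h \<Longrightarrow> h x = h (J (P x)) + h (x - J (P x))"
  by (simp add: linear_diff)

lemma is_dual_abs_comp_P:
  assumes a: "is_dual_abs leE f a"
  shows "is_dual_abs le (\<lambda>x. f (P x)) (\<lambda>x. a (P x))"
  unfolding is_dual_abs_def
proof (intro conjI allI impI)
  show "bounded_linear (\<lambda>x. a (P x))"
    using bounded_linear_compose[OF is_dual_abs_bounded_linear[OF a] bounded_linear_P] .
  show "dual_le le (\<lambda>x. f (P x)) (\<lambda>x. a (P x))" "dual_le le (\<lambda>x. - f (P x)) (\<lambda>x. a (P x))"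
    using a by (auto simp: is_dual_abs_def dual_le_def P_nonneg)
  fix h assume h: "bounded_linear h \<and> dual_le le (\<lambda>x. f (P x)) h \<and> dual_le le (\<lambda>x. - f (P x)) h"
  have "dual_le leE f (\<lambda>x. h (J x))" "dual_le leE (\<lambda>x. - f x) (\<lambda>x. h (J x))"
    using h unfolding dual_le_def by (metis P_J J_nonneg)+
  then have "dual_le leE a (\<lambda>x. h (J x))"
    using a h bounded_linear_compose[OF _ bounded_linear_J, of h] unfolding is_dual_abs_def by blast
  moreover have "0 \<le> h (x - J (P x))" if "le 0 x" for x
    using h dual_le_both_nonneg complement_nonneg[OF that] by blast
  moreover have "h x = h (J (P x)) + h (x - J (P x))" for x
    using h linear_split bounded_linear.linear by blast
  ultimately show "dual_le le (\<lambda>x. a (P x)) h"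
    unfolding dual_le_def by (smt (verit) P_nonneg)
qed

lemma is_dual_abs_comp_J:
  assumes g: "bounded_linear g" and a: "is_dual_abs le g a"
  shows "is_dual_abs leE (\<lambda>x. g (J x)) (\<lambda>x. a (J x))"
  unfolding is_dual_abs_def
proof (intro conjI allI impI)
  have ba: "bounded_linear a" using is_dual_abs_bounded_linear[OF a] .
  show "bounded_linear (\<lambda>x. a (J x))"
    using bounded_linear_compose[OF ba bounded_linear_J] .
  show "dual_le leE (\<lambda>x. g (J x)) (\<lambda>x. a (J x))" "dual_le leE (\<lambda>x. - g (J x)) (\<lambda>x. a (J x))"
    using a by (auto simp: is_dual_abs_def dual_le_def J_nonneg)
  fix h assume h: "bounded_linear h \<and> dual_le leE (\<lambda>x. g (J x)) h \<and> dual_le leE (\<lambda>x. - g (J x)) h"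
  define h' where "h' x = h (P x) + a (x - J (P x))" for x
  have "bounded_linear h'"
    unfolding h'_def
    by (intro bounded_linear_add bounded_linear_compose[OF _ bounded_linear_P]
        bounded_linear_compose[OF ba] bounded_linear_sub bounded_linear_ident
        bounded_linear_compose[OF bounded_linear_J]) (use h in auto)
  moreover have "dual_le le g h'" "dual_le le (\<lambda>x. - g x) h'"
  proof -
    have "g (J (P x)) \<le> h (P x)" "- g (J (P x)) \<le> h (P x)"
      "g (x - J (P x)) \<le> a (x - J (P x))" "- g (x - J (P x)) \<le> a (x - J (P x))"
      if "le 0 x" for x
      using h a P_nonneg[OF that] complement_nonneg[OF that]
      by (auto simp: is_dual_abs_def dual_le_def)
    moreover have "g x = g (J (P x)) + g (x - J (P x))" for x
      using linear_split[OF bounded_linear.linear[OF g]] .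
    ultimately show "dual_le le g h'" "dual_le le (\<lambda>x. - g x) h'"
      unfolding dual_le_def h'_def by (smt (verit))+
  qed
  ultimately have "dual_le le a h'"
    using a unfolding is_dual_abs_def by blast
  then show "dual_le leE (\<lambda>x. a (J x)) h"
    using J_nonneg linear_0[OF bounded_linear.linear[OF ba]] unfolding dual_le_def h'_def
    by (metis P_J diff_self add.right_neutral)
qed

lemma dual_disjoint_comp_P:
  assumes "dual_disjoint leE f g"
  shows "dual_disjoint le (\<lambda>x. f (P x)) (\<lambda>x. g (P x))"
proof -
  obtain a b where a: "is_dual_abs leE f a" and b: "is_dual_abs leE g b"
    and inf_zero: "\<And>h. bounded_linear h \<and> dual_le leE h a \<and> dual_le leE h b \<Longrightarrow> dual_le leE h (\<lambda>y. 0)"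
    using assms unfolding dual_disjoint_def by blast
  show ?thesis
    unfolding dual_disjoint_def
  proof (intro exI conjI allI impI)
    show "is_dual_abs le (\<lambda>x. f (P x)) (\<lambda>x. a (P x))" "is_dual_abs le (\<lambda>x. g (P x)) (\<lambda>x. b (P x))"
      using a b by (simp_all add: is_dual_abs_comp_P)
    fix h assume h: "bounded_linear h \<and> dual_le le h (\<lambda>x. a (P x)) \<and> dual_le le h (\<lambda>x. b (P x))"
    have "dual_le leE (\<lambda>y. h (J y)) (\<lambda>y. 0)"
    proof (rule inf_zero, intro conjI)
      show "bounded_linear (\<lambda>y. h (J y))"
        using h bounded_linear_compose[OF _ bounded_linear_J] by blast
      show "dual_le leE (\<lambda>y. h (J y)) a" "dual_le leE (\<lambda>y. h (J y)) b"
        using h unfolding dual_le_def by (metis P_J J_nonneg)+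
    qed
    moreover have "h (x - J (P x)) \<le> 0" if "le 0 x" for x
      using h complement_nonneg[OF that] P_complement
        linear_0[OF bounded_linear.linear[OF is_dual_abs_bounded_linear[OF a]]]
      unfolding dual_le_def by metis
    moreover have "h x = h (J (P x)) + h (x - J (P x))" for x
      using h linear_split bounded_linear.linear by blast
    ultimately show "dual_le le h (\<lambda>x. 0)"
      unfolding dual_le_def by (smt (verit) P_nonneg)
  qed
qed

lemma dual_disjoint_comp_J:
  assumes g: "bounded_linear g" and k: "bounded_linear k" and "dual_disjoint le g k"
  shows "dual_disjoint leE (\<lambda>y. g (J y)) (\<lambda>y. k (J y))"
proof -
  obtain a b where a: "is_dual_abs le g a" and b: "is_dual_abs le k b"
    and inf_zero: "\<And>h. bounded_linear h \<and> dual_le le h a \<and> dual_le le h b \<Longrightarrow> dual_le le h (\<lambda>x. 0)"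
    using assms(3) unfolding dual_disjoint_def by blast
  have below_modulus: "dual_le le (\<lambda>x. h (P x)) c"
    if c: "is_dual_abs le q c" and h: "dual_le leE h (\<lambda>y. c (J y))" for q c and h :: "'e \<Rightarrow> real"
  proof -
    have "c x = c (J (P x)) + c (x - J (P x))" for x
      using linear_split bounded_linear.linear is_dual_abs_bounded_linear[OF c] by blast
    then show ?thesis
      using h is_dual_abs_nonneg[OF c] complement_nonneg P_nonneg unfolding dual_le_def
      by (smt (verit))
  qed
  show ?thesis
    unfolding dual_disjoint_def
  proof (intro exI conjI allI impI)
    show "is_dual_abs leE (\<lambda>y. g (J y)) (\<lambda>y. a (J y))" "is_dual_abs leE (\<lambda>y. k (J y)) (\<lambda>y. b (J y))"
      using a b g k by (simp_all add: is_dual_abs_comp_J)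
    fix h assume h: "bounded_linear h \<and> dual_le leE h (\<lambda>y. a (J y)) \<and> dual_le leE h (\<lambda>y. b (J y))"
    then have "dual_le le (\<lambda>x. h (P x)) (\<lambda>x. 0)"
      using inf_zero below_modulus[OF a] below_modulus[OF b] bounded_linear_compose[OF _ bounded_linear_P]
      by blast
    then show "dual_le leE h (\<lambda>y. 0)"
      unfolding dual_le_def by (metis P_J J_nonneg)
  qed
qed

lemma disjoint_operator_seq_comp_P:
  "disjoint_operator_seq leE f \<Longrightarrow> disjoint_operator_seq le (\<lambda>n x. f n (P x))"
  unfolding disjoint_operator_seq_def
  using bounded_linear_compose[OF _ bounded_linear_P] dual_disjoint_comp_P by blast

lemma disjoint_operator_seq_comp_J:
  "disjoint_operator_seq le g \<Longrightarrow> disjoint_operator_seq leE (\<lambda>n y. g n (J y))"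
  unfolding disjoint_operator_seq_def
  using bounded_linear_compose[OF _ bounded_linear_J] dual_disjoint_comp_J by blast

lemma almost_grothendieck_image:
  assumes "almost_grothendieck le C"
  shows "almost_grothendieck leE (P ` C)"
  unfolding almost_grothendieck_iff
proof (intro allI impI)
  fix f assume "disjoint_operator_seq leE f"
  then have "rel_weakly_compact_c0 ((\<lambda>x n. f n (P x)) ` C)"
    using assms disjoint_operator_seq_comp_P unfolding almost_grothendieck_iff by blast
  then show "rel_weakly_compact_c0 ((\<lambda>y n. f n y) ` P ` C)"
    by (simp add: image_image)
qed

end

lemma band_summand_fst:
  fixes leE :: "'a::banach \<Rightarrow> 'a \<Rightarrow> bool" and leF :: "'b::banach \<Rightarrow> 'b \<Rightarrow> bool"
  assumes "leE 0 0" and "leF 0 0"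
  shows "band_summand (sum_le leE leF) leE fst (\<lambda>x. (x, 0))"
proof (rule band_summand.intro)
  show "bounded_linear (fst :: 'a \<times> 'b \<Rightarrow> 'a)" "bounded_linear (\<lambda>x::'a. (x, 0::'b))"
    using bounded_linear_fst bounded_linear_Pair[OF bounded_linear_ident bounded_linear_zero] by simp_all
qed (use assms in \<open>auto simp: sum_le_def\<close>)

lemma band_summand_snd:
  fixes leE :: "'a::banach \<Rightarrow> 'a \<Rightarrow> bool" and leF :: "'b::banach \<Rightarrow> 'b \<Rightarrow> bool"
  assumes "leE 0 0" and "leF 0 0"
  shows "band_summand (sum_le leE leF) leF snd (\<lambda>y. (0, y))"
proof (rule band_summand.intro)
  show "bounded_linear (snd :: 'a \<times> 'b \<Rightarrow> 'b)" "bounded_linear (\<lambda>y::'b. (0::'a, y))"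
    using bounded_linear_snd bounded_linear_Pair[OF bounded_linear_zero bounded_linear_ident] by simp_all
qed (use assms in \<open>auto simp: sum_le_def\<close>)

lemma zero_in_c0_dual: "(\<lambda>x. 0) \<in> c0_dual"
  unfolding c0_dual_def by (auto intro!: exI[of _ 0])

lemma topspace_c0_weak: "topspace c0_weak = c0"
proof -
  have "c0 = {x\<in>c0. (\<lambda>x. 0::real) x \<in> UNIV}" by simp
  then have "c0 \<subseteq> \<Union>{{x\<in>c0. \<phi> x \<in> U} | \<phi> U. \<phi> \<in> c0_dual \<and> open U}"
    using zero_in_c0_dual by blast
  then show ?thesis
    unfolding c0_weak_def by auto
qed

lemma continuous_map_c0_dual:
  assumes "\<phi> \<in> c0_dual"
  shows "continuous_map c0_weak euclideanreal \<phi>"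
  unfolding continuous_map_def topspace_c0_weak
proof (intro conjI allI impI)
  fix U :: "real set" assume "openin euclideanreal U"
  then show "openin c0_weak {x \<in> c0. \<phi> x \<in> U}"
    unfolding c0_weak_def using assms by (intro topology_generated_by_Basis) auto
qed simp

lemma c0_add: "u \<in> c0 \<Longrightarrow> v \<in> c0 \<Longrightarrow> (\<lambda>n. u n + v n) \<in> c0"
  unfolding c0_def using tendsto_add[of u 0 sequentially v 0] by simp

lemma continuous_map_c0_weak_add:
  "continuous_map (prod_topology c0_weak c0_weak) c0_weak (\<lambda>p n. fst p n + snd p n)"
proof -
  define \<S> where "\<S> = {{x\<in>c0. \<phi> x \<in> V} | \<phi> V. \<phi> \<in> c0_dual \<and> open V}"
  let ?X = "prod_topology c0_weak c0_weak" and ?add = "\<lambda>p n. fst p n + snd p n"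
  have "continuous_map ?X (topology_generated_by \<S>) ?add"
  proof (rule continuous_on_generated_topo)
    fix U assume "U \<in> \<S>"
    then obtain \<phi> V where U: "U = {x\<in>c0. \<phi> x \<in> V}" and \<phi>: "\<phi> \<in> c0_dual" and V: "open V"
      unfolding \<S>_def by blast
    have additive: "\<phi> (\<lambda>n. u n + v n) = \<phi> u + \<phi> v" if "u \<in> c0" "v \<in> c0" for u v
      using \<phi> that unfolding c0_dual_def by blast
    have "continuous_map ?X euclideanreal (\<lambda>p. \<phi> (fst p) + \<phi> (snd p))"
      using continuous_map_c0_dual[OF \<phi>]
      by (intro continuous_map_add continuous_map_compose[OF continuous_map_fst, unfolded o_def]
          continuous_map_compose[OF continuous_map_snd, unfolded o_def])
    then have "openin ?X {p \<in> topspace ?X. \<phi> (fst p) + \<phi> (snd p) \<in> V}"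
      using V by (intro openin_continuous_map_preimage) auto
    moreover have "?add -` U \<inter> topspace ?X = {p \<in> topspace ?X. \<phi> (fst p) + \<phi> (snd p) \<in> V}"
      unfolding U by (auto simp: topspace_c0_weak c0_add additive)
    ultimately show "openin ?X (?add -` U \<inter> topspace ?X)"
      by simp
  next
    have "\<Union>\<S> = c0"
      using topspace_c0_weak by (simp add: c0_weak_def \<S>_def)
    then show "?add ` topspace ?X \<subseteq> \<Union>\<S>"
      by (auto simp: topspace_c0_weak c0_add)
  qed
  then show ?thesis
    by (simp add: c0_weak_def \<S>_def)
qed

lemma rel_weakly_compact_c0_subset:
  "rel_weakly_compact_c0 T \<Longrightarrow> S \<subseteq> T \<Longrightarrow> rel_weakly_compact_c0 S"
  unfolding rel_weakly_compact_c0_def by blast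

lemma rel_weakly_compact_c0_sums:
  assumes "rel_weakly_compact_c0 S" and "rel_weakly_compact_c0 T"
  shows "rel_weakly_compact_c0 {\<lambda>n. u n + v n | u v. u \<in> S \<and> v \<in> T}"
proof -
  obtain K L where K: "S \<subseteq> K" "compactin c0_weak K" and L: "T \<subseteq> L" "compactin c0_weak L"
    using assms unfolding rel_weakly_compact_c0_def by blast
  then have "compactin c0_weak ((\<lambda>p n. fst p n + snd p n) ` (K \<times> L))"
    using image_compactin[OF _ continuous_map_c0_weak_add] compactin_Times by blast
  moreover have "{\<lambda>n. u n + v n | u v. u \<in> S \<and> v \<in> T} \<subseteq> (\<lambda>p n. fst p n + snd p n) ` (K \<times> L)"
    using K L by force
  ultimately show ?thesis
    unfolding rel_weakly_compact_c0_def by blast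
qed

lemma almost_grothendieck_Times:
  fixes leE :: "'a::banach \<Rightarrow> 'a \<Rightarrow> bool" and leF :: "'b::banach \<Rightarrow> 'b \<Rightarrow> bool"
  assumes "leE 0 0" and "leF 0 0"
    and A: "almost_grothendieck leE A" and B: "almost_grothendieck leF B"
  shows "almost_grothendieck (sum_le leE leF) (A \<times> B)"
  unfolding almost_grothendieck_iff
proof (intro allI impI)
  interpret E: band_summand "sum_le leE leF" leE fst "\<lambda>x. (x, 0)"
    using assms(1,2) by (rule band_summand_fst)
  interpret F: band_summand "sum_le leE leF" leF snd "\<lambda>y. (0, y)"
    using assms(1,2) by (rule band_summand_snd)
  fix g assume g: "disjoint_operator_seq (sum_le leE leF) g"
  let ?SA = "(\<lambda>x n. g n (x, 0)) ` A" and ?SB = "(\<lambda>y n. g n (0, y)) ` B"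
  have "rel_weakly_compact_c0 ?SA"
    using A E.disjoint_operator_seq_comp_J[OF g] unfolding almost_grothendieck_iff by blast
  moreover have "rel_weakly_compact_c0 ?SB"
    using B F.disjoint_operator_seq_comp_J[OF g] unfolding almost_grothendieck_iff by blast
  moreover have "(\<lambda>p n. g n p) ` (A \<times> B) \<subseteq> {\<lambda>n. u n + v n | u v. u \<in> ?SA \<and> v \<in> ?SB}"
  proof
    fix z assume "z \<in> (\<lambda>p n. g n p) ` (A \<times> B)"
    then obtain x y where "x \<in> A" "y \<in> B" and z: "z = (\<lambda>n. g n (x, y))"
      by blast
    have "g n (x, y) = g n (x, 0) + g n (0, y)" for n
      using g E.linear_split[of "g n" "(x, y)"] bounded_linear.linear
      unfolding disjoint_operator_seq_def by auto
    then have "z = (\<lambda>n. g n (x, 0) + g n (0, y))"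
      using z by simp
    then show "z \<in> {\<lambda>n. u n + v n | u v. u \<in> ?SA \<and> v \<in> ?SB}"
      using \<open>x \<in> A\<close> \<open>y \<in> B\<close>
      by (intro CollectI exI[of _ "\<lambda>n. g n (x, 0)"] exI[of _ "\<lambda>n. g n (0, y)"]) auto
  qed
  ultimately show "rel_weakly_compact_c0 ((\<lambda>p n. g n p) ` (A \<times> B))"
    using rel_weakly_compact_c0_sums rel_weakly_compact_c0_subset by blast
qed

lemma banach_lattice_refl: "banach_lattice le \<Longrightarrow> le x x"
  unfolding banach_lattice_def by blast

theorem mainTheorem7:
  fixes leE :: "'a::banach \<Rightarrow> 'a \<Rightarrow> bool" and leF :: "'b::banach \<Rightarrow> 'b \<Rightarrow> bool"
  assumes "banach_lattice leE" and "banach_lattice leF"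
  shows "(\<forall>(A::'a set) (B::'b set). A \<noteq> {} \<longrightarrow> B \<noteq> {} \<longrightarrow>
            ((almost_grothendieck leE A \<and> almost_grothendieck leF B) \<longleftrightarrow>
             almost_grothendieck (sum_le leE leF) (A \<times> B)))
       \<and> (\<forall>C :: ('a \<times> 'b) set. almost_grothendieck (sum_le leE leF) C \<longrightarrow>
            almost_grothendieck leE (fst ` C) \<and> almost_grothendieck leF (snd ` C))"
proof -
  have "leE 0 0" "leF 0 0"
    using assms by (simp_all add: banach_lattice_refl)
  interpret E: band_summand "sum_le leE leF" leE fst "\<lambda>x. (x, 0)"
    using \<open>leE 0 0\<close> \<open>leF 0 0\<close> by (rule band_summand_fst)
  interpret F: band_summand "sum_le leE leF" leF snd "\<lambda>y. (0, y)"
    using \<open>leE 0 0\<close> \<open>leF 0 0\<close> by (rule band_summand_snd)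
  have projections: "almost_grothendieck leE (fst ` C) \<and> almost_grothendieck leF (snd ` C)"
    if "almost_grothendieck (sum_le leE leF) C" for C :: "('a \<times> 'b) set"
    using that by (intro conjI E.almost_grothendieck_image F.almost_grothendieck_image)
  have "(almost_grothendieck leE A \<and> almost_grothendieck leF B) \<longleftrightarrow>
      almost_grothendieck (sum_le leE leF) (A \<times> B)"
    if "A \<noteq> {}" "B \<noteq> {}" for A :: "'a set" and B :: "'b set"
  proof
    show "almost_grothendieck (sum_le leE leF) (A \<times> B)"
      if "almost_grothendieck leE A \<and> almost_grothendieck leF B"
      using \<open>leE 0 0\<close> \<open>leF 0 0\<close> that by (intro almost_grothendieck_Times) auto
    show "almost_grothendieck leE A \<and> almost_grothendieck leF B"
      if "almost_grothendieck (sum_le leE leF) (A \<times> B)"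
      using projections[OF that] \<open>A \<noteq> {}\<close> \<open>B \<noteq> {}\<close> by simp
  qed
  with projections show ?thesis
    by blast
qed

end
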